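(* For any $\rho\in(0,\frac\pi2)$ and all $\tilde\theta\in\mathbb S(\rho)$, $$\sin(\rho)\lambda_2I\le\nabla^2U(\tilde\theta)\le\lambda_NI,$$ where $\lambda_2$ and $\lambda_N$ are the second-smallest and largest eigenvalues of $M^{-1}L_B$, respectively.
   Context: Let $(\mathcal N,\mathcal E)$ be a connected undirected graph, $\mathcal N=\{1,\dots,N\}$, $E=|\mathcal E|$, with edge weights $B^0_{ij}>0$. Fix an edge orientation, let $A\in\mathbb R^{N\times E}$ be the node-edge incidence matrix, $\Gamma=\mathrm{diag}(B^0_{ij},\{i,j\}\in\mathcal E)$ and $L_B=A\Gamma A^T$. Let $M=\mathrm{diag}(M_1,\dots,M_N)$ with $M_i>0$ and $Y\in\mathbb R^{N\times(N-1)}$ a matrix whose columns form an orthonormal basis of the null space of $\mathbb 1_N^TM^{1/2}$. Define $U(\tilde\theta):=-\mathbb 1_E^T\Gamma\cos(A^TM^{-1/2}Y\tilde\theta)$ for $\tilde\theta\in\mathbb R^{N-1}$ (cosine elementwise), whose Hessian is $\nabla^2U(\tilde\theta)=Y^TM^{-1/2}A\,\mathrm{diag}(\Gamma\cos(A^TM^{-1/2}Y\tilde\theta))A^TM^{-1/2}Y$. For $\rho\in(0,\frac\pi2)$, $\mathbb S(\rho):=\{\tilde\theta:\max_l|(A^TM^{-1/2}Y\tilde\theta)_l|<\frac\pi2-\rho\}$. For symmetric matrices, $A\le B$ means $B-A$ is positive semidefinite. *)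

theory Defs
  imports "Jordan_Normal_Form.Char_Poly" "HOL-Computational_Algebra.Polynomial"
begin

text \<open>Nodes are 0..N-1; the oriented edge set is a list es of pairs (tail, head);
  edge l has weight w l (this is B^0 of that edge).\<close>

definition incidence :: "nat \<Rightarrow> (nat \<times> nat) list \<Rightarrow> real mat" where
  "incidence N es = mat N (length es)
     (\<lambda>(i,l). if i = fst (es ! l) then 1 else if i = snd (es ! l) then -1 else 0)"

definition simple_graph :: "nat \<Rightarrow> (nat \<times> nat) list \<Rightarrow> bool" where
  "simple_graph N es \<longleftrightarrow>
     (\<forall>l < length es. fst (es ! l) < N \<and> snd (es ! l) < N \<and> fst (es ! l) \<noteq> snd (es ! l)) \<and>
     (\<forall>l < length es. \<forall>l' < length es. l \<noteq> l' \<longrightarrow>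
        {fst (es ! l), snd (es ! l)} \<noteq> {fst (es ! l'), snd (es ! l')})"

definition adj_rel :: "(nat \<times> nat) list \<Rightarrow> (nat \<times> nat) set" where
  "adj_rel es = set es \<union> (set es)\<inverse>"

definition graph_connected :: "nat \<Rightarrow> (nat \<times> nat) list \<Rightarrow> bool" where
  "graph_connected N es \<longleftrightarrow> (\<forall>i < N. \<forall>j < N. (i, j) \<in> (adj_rel es)\<^sup>*)"

definition diag_mat :: "nat \<Rightarrow> (nat \<Rightarrow> real) \<Rightarrow> real mat" where
  "diag_mat n d = mat n n (\<lambda>(i,j). if i = j then d i else 0)"

definition Gam :: "(nat \<times> nat) list \<Rightarrow> (nat \<Rightarrow> real) \<Rightarrow> real mat" where
  "Gam es w = diag_mat (length es) w"

definition laplB :: "nat \<Rightarrow> (nat \<times> nat) list \<Rightarrow> (nat \<Rightarrow> real) \<Rightarrow> real mat" where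
  "laplB N es w = incidence N es * Gam es w * (incidence N es)\<^sup>T"

definition Mhalf :: "nat \<Rightarrow> (nat \<Rightarrow> real) \<Rightarrow> real mat" where
  "Mhalf N m = diag_mat N (\<lambda>i. sqrt (m i))"

definition Mmhalf :: "nat \<Rightarrow> (nat \<Rightarrow> real) \<Rightarrow> real mat" where
  "Mmhalf N m = diag_mat N (\<lambda>i. 1 / sqrt (m i))"

definition Minv :: "nat \<Rightarrow> (nat \<Rightarrow> real) \<Rightarrow> real mat" where
  "Minv N m = diag_mat N (\<lambda>i. 1 / m i)"

text \<open>Eigenvalues of a real square matrix, counted with algebraic multiplicity
  (real roots of the characteristic polynomial), in increasing order.
  eig_sorted A ! 1 is the second smallest, last (eig_sorted A) the largest.\<close>
definition eig_sorted :: "real mat \<Rightarrow> real list" where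
  "eig_sorted A = sorted_list_of_multiset (proots (char_poly A))"

text \<open>Hessian of U, as given by the closed form in the paper.\<close>
definition hessU :: "nat \<Rightarrow> (nat \<times> nat) list \<Rightarrow> (nat \<Rightarrow> real) \<Rightarrow> (nat \<Rightarrow> real) \<Rightarrow> real mat
    \<Rightarrow> real vec \<Rightarrow> real mat" where
  "hessU N es w m Y th =
     (let A = incidence N es;
          phi = A\<^sup>T * Mmhalf N m * Y *\<^sub>v th;
          D = diag_mat (length es) (\<lambda>l. w l * cos (phi $ l))
      in Y\<^sup>T * Mmhalf N m * A * D * A\<^sup>T * Mmhalf N m * Y)"

definition S_rho :: "nat \<Rightarrow> (nat \<times> nat) list \<Rightarrow> (nat \<Rightarrow> real) \<Rightarrow> real mat \<Rightarrow> real \<Rightarrow> real vec set" where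
  "S_rho N es m Y \<rho> = {th. th \<in> carrier_vec (N - 1) \<and>
     (\<forall>l < length es. \<bar>((incidence N es)\<^sup>T * Mmhalf N m * Y *\<^sub>v th) $ l\<bar> < pi / 2 - \<rho>)}"

definition psd :: "nat \<Rightarrow> real mat \<Rightarrow> bool" where
  "psd n P \<longleftrightarrow> P \<in> carrier_mat n n \<and> P\<^sup>T = P \<and>
     (\<forall>x \<in> carrier_vec n. x \<bullet> (P *\<^sub>v x) \<ge> 0)"

definition loewner_le :: "nat \<Rightarrow> real mat \<Rightarrow> real mat \<Rightarrow> bool" where
  "loewner_le n A B \<longleftrightarrow> psd n (B - A)"

end

theory Submission
  imports Defs "Jordan_Normal_Form.Spectral_Radius" "Jordan_Normal_Form.Schur_Decomposition"
begin

text \<open>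
  Put \<open>K = M^(-1/2) L_B M^(-1/2)\<close>, which is similar to \<open>M^(-1) L_B\<close>. The Hessian is
  \<open>Y^T K' Y\<close>, where \<open>K'\<close> is built like \<open>K\<close> but with the edge weights \<open>B_l\<close> replaced by
  \<open>B_l cos(phi_l)\<close>. On \<open>S(rho)\<close> we have \<open>sin(rho) \<le> cos(phi_l) \<le> 1\<close>, so for \<open>u = Y x\<close> the
  form \<open>x^T (Hess U) x\<close> lies between \<open>sin(rho) u^T K u\<close> and \<open>u^T K u\<close>. Since \<open>Y\<close> maps
  isometrically onto the orthogonal complement of the kernel vector \<open>M^(1/2) 1\<close> of the
  positive semidefinite matrix \<open>K\<close>, the Rayleigh quotient of \<open>K\<close> at \<open>u\<close> lies between \<open>lambda_2\<close>
  and \<open>lambda_N\<close>.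
\<close>

lemma assoc_mult_mat_dims:
  fixes A B C :: "'a :: semiring_0 mat"
  assumes "dim_col A = dim_row B" and "dim_col B = dim_row C"
  shows "A * B * C = A * (B * C)"
  using assms
  by (intro assoc_mult_mat[of A "dim_row A" "dim_col A" B "dim_col B" C "dim_col C"])
     (auto intro: carrier_matI)

lemma assoc_mult_mat_vec_dims:
  fixes A B :: "'a :: semiring_0 mat"
  assumes "dim_col A = dim_row B" and "dim_col B = dim_vec x"
  shows "(A * B) *\<^sub>v x = A *\<^sub>v (B *\<^sub>v x)"
  using assms
  by (intro assoc_mult_mat_vec[of A "dim_row A" "dim_col A" B "dim_col B" x])
     (auto intro: carrier_matI carrier_vecI)

lemma transpose_mult_dims:
  fixes A B :: "'a :: comm_semiring_0 mat"
  assumes "dim_col A = dim_row B"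
  shows "(A * B)\<^sup>T = B\<^sup>T * A\<^sup>T"
  using assms by (intro transpose_mult[of A "dim_row A" "dim_col A" B "dim_col B"]) (auto intro: carrier_matI)

lemma mult_mat_vec_zero: "(A :: 'a :: semiring_0 mat) *\<^sub>v 0\<^sub>v (dim_col A) = 0\<^sub>v (dim_row A)"
  by (intro eq_vecI) (auto simp: scalar_prod_def)

lemma scalar_prod_transpose_mult_vec:
  fixes P :: "'a :: comm_semiring_0 mat"
  assumes u: "dim_vec u = dim_row P" and x: "dim_vec x = dim_col P"
  shows "x \<bullet> (P\<^sup>T *\<^sub>v u) = (P *\<^sub>v x) \<bullet> u"
proof -
  have "(P *\<^sub>v x) \<bullet> u = u \<bullet> (P *\<^sub>v x)"
    by (rule comm_scalar_prod[of _ "dim_row P"]) (use u in \<open>auto intro: carrier_vecI\<close>)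
  also have "\<dots> = (P\<^sup>T *\<^sub>v u) \<bullet> x"
    by (rule transpose_vec_mult_scalar[symmetric, of P "dim_row P" "dim_col P"])
       (use u x in \<open>auto intro: carrier_vecI carrier_matI\<close>)
  also have "\<dots> = x \<bullet> (P\<^sup>T *\<^sub>v u)"
    by (rule comm_scalar_prod[of _ "dim_col P"]) (use x in \<open>auto intro: carrier_vecI\<close>)
  finally show ?thesis by simp
qed

lemma quadratic_form_congruence:
  fixes C G :: "real mat"
  assumes C: "C \<in> carrier_mat k n" and G: "G \<in> carrier_mat k k" and x: "x \<in> carrier_vec n"
  shows "x \<bullet> ((C\<^sup>T * G * C) *\<^sub>v x) = (C *\<^sub>v x) \<bullet> (G *\<^sub>v (C *\<^sub>v x))"
  using C G x by (simp add: assoc_mult_mat_vec_dims scalar_prod_transpose_mult_vec)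

lemma transpose_congruence:
  fixes C G :: "'a :: comm_semiring_0 mat"
  assumes "C \<in> carrier_mat k n" and "G \<in> carrier_mat k k" and "G\<^sup>T = G"
  shows "(C\<^sup>T * G * C)\<^sup>T = C\<^sup>T * G * C"
  using assms by (simp add: transpose_mult_dims assoc_mult_mat_dims)

lemma diag_mat_carrier [simp]: "diag_mat n g \<in> carrier_mat n n"
  unfolding diag_mat_def by auto

lemma dim_diag_mat [simp]: "dim_row (diag_mat n g) = n" "dim_col (diag_mat n g) = n"
  unfolding diag_mat_def by auto

lemma transpose_diag_mat [simp]: "(diag_mat n g)\<^sup>T = diag_mat n g"
  unfolding diag_mat_def by (rule eq_matI) auto

lemma diag_mat_cong: "(\<And>i. i < n \<Longrightarrow> f i = g i) \<Longrightarrow> diag_mat n f = diag_mat n g"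
  unfolding diag_mat_def by (rule eq_matI) auto

lemma diag_mat_const: "diag_mat n (\<lambda>_. c) = c \<cdot>\<^sub>m 1\<^sub>m n"
  unfolding diag_mat_def by (rule eq_matI) auto

lemma diag_mat_one: "diag_mat n (\<lambda>_. 1) = 1\<^sub>m n"
  unfolding diag_mat_def by (rule eq_matI) auto

lemma diag_mat_mult_vec:
  assumes "y \<in> carrier_vec n"
  shows "diag_mat n g *\<^sub>v y = vec n (\<lambda>i. g i * y $ i)"
proof (rule eq_vecI)
  fix i assume "i < dim_vec (vec n (\<lambda>i. g i * y $ i))"
  then have i: "i < n" by simp
  have "(diag_mat n g *\<^sub>v y) $ i = (\<Sum>j\<in>{0..<n}. (if i = j then g i else 0) * y $ j)"
    using i assms unfolding diag_mat_def by (auto simp: scalar_prod_def row_def)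
  also have "\<dots> = g i * y $ i"
    using i by (simp add: if_distrib[of "\<lambda>a. a * _"] cong: if_cong)
  finally show "(diag_mat n g *\<^sub>v y) $ i = vec n (\<lambda>i. g i * y $ i) $ i" using i by simp
qed (simp add: diag_mat_def)

lemma diag_mat_mult_diag_mat: "diag_mat n f * diag_mat n g = diag_mat n (\<lambda>i. f i * g i)"
proof (rule eq_matI)
  fix i j assume "i < dim_row (diag_mat n (\<lambda>i. f i * g i))" "j < dim_col (diag_mat n (\<lambda>i. f i * g i))"
  then have i: "i < n" and j: "j < n" by auto
  have "(diag_mat n f * diag_mat n g) $$ (i, j) =
      (\<Sum>k\<in>{0..<n}. (if i = k then f i else 0) * (if k = j then g k else 0))"
    using i j unfolding diag_mat_def by (auto simp: scalar_prod_def row_def col_def)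
  also have "\<dots> = (\<Sum>k\<in>{0..<n}. if k = i then (if i = j then f i * g i else 0) else 0)"
    by (rule sum.cong) auto
  finally show "(diag_mat n f * diag_mat n g) $$ (i, j) = diag_mat n (\<lambda>i. f i * g i) $$ (i, j)"
    using i j unfolding diag_mat_def by simp
qed simp_all

lemma quadratic_form_diag_mat:
  "y \<in> carrier_vec n \<Longrightarrow> y \<bullet> (diag_mat n g *\<^sub>v y) = (\<Sum>i<n. g i * (y $ i)\<^sup>2)"
  by (simp add: diag_mat_mult_vec scalar_prod_def lessThan_atLeast0 power2_eq_square algebra_simps)

lemma quadratic_form_congruence_diag_mat:
  fixes C :: "real mat"
  assumes "C \<in> carrier_mat k n" and "x \<in> carrier_vec n"
  shows "x \<bullet> ((C\<^sup>T * diag_mat k g * C) *\<^sub>v x) = (\<Sum>i<k. g i * ((C *\<^sub>v x) $ i)\<^sup>2)"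
  using assms by (simp add: quadratic_form_congruence quadratic_form_diag_mat)

lemma conjugate_real_vec [simp]: "conjugate (x :: real vec) = x"
  by (rule eq_vecI) auto

lemma scalar_prod_self_nonneg: "0 \<le> (x :: real vec) \<bullet> x"
  using conjugate_square_ge_0_vec[of x] by simp

lemma scalar_prod_self_pos: "(x :: real vec) \<in> carrier_vec n \<Longrightarrow> x \<noteq> 0\<^sub>v n \<Longrightarrow> 0 < x \<bullet> x"
  using conjugate_square_greater_0_vec[of x n] by simp

lemma scalar_prod_self_eq_sum_squares:
  "(y :: real vec) \<in> carrier_vec n \<Longrightarrow> y \<bullet> y = (\<Sum>i<n. (y $ i)\<^sup>2)"
  unfolding scalar_prod_def lessThan_atLeast0 by (auto simp: power2_eq_square)

lemma orthogonal_mat_right_inverse: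
  fixes U :: "real mat"
  assumes "U \<in> carrier_mat n n" and "U\<^sup>T * U = 1\<^sub>m n"
  shows "U * U\<^sup>T = 1\<^sub>m n"
  using assms by (intro mat_mult_left_right_inverse[of "U\<^sup>T" n]) auto

lemma orthogonal_mat_mult:
  fixes U V :: "real mat"
  assumes U: "U \<in> carrier_mat n n" "U\<^sup>T * U = 1\<^sub>m n" and V: "V \<in> carrier_mat n n" "V\<^sup>T * V = 1\<^sub>m n"
  shows "(U * V)\<^sup>T * (U * V) = 1\<^sub>m n"
proof -
  have "(U * V)\<^sup>T * (U * V) = V\<^sup>T * ((U\<^sup>T * U) * V)"
    using U(1) V(1) by (simp add: transpose_mult_dims assoc_mult_mat_dims)
  then show ?thesis using U(2) V by simp
qed

lemma scalar_prod_orthogonal_mat: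
  fixes U :: "real mat"
  assumes U: "U \<in> carrier_mat n n" "U\<^sup>T * U = 1\<^sub>m n"
    and x: "x \<in> carrier_vec n" and y: "y \<in> carrier_vec n"
  shows "(U\<^sup>T *\<^sub>v x) \<bullet> (U\<^sup>T *\<^sub>v y) = x \<bullet> y"
proof -
  have "y = U *\<^sub>v (U\<^sup>T *\<^sub>v y)"
    using orthogonal_mat_right_inverse[OF U] U y
    by (metis assoc_mult_mat_vec carrier_matD one_mult_mat_vec transpose_carrier_mat)
  then show ?thesis
    using transpose_vec_mult_scalar[OF U(1), of "U\<^sup>T *\<^sub>v y" x] U x y by auto
qed

section \<open>Spectral theorem for real symmetric matrices\<close>

lemma hermitian_form_of_real_symmetric_is_real:
  fixes K :: "real mat" and v :: "complex vec"
  assumes K: "K \<in> carrier_mat n n" "K\<^sup>T = K" and v: "v \<in> carrier_vec n"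
  defines "S \<equiv> \<Sum>i<n. cnj (v $ i) * (map_mat complex_of_real K *\<^sub>v v) $ i"
  shows "cnj S = S"
proof -
  have symK: "K $$ (i, j) = K $$ (j, i)" if "i < n" "j < n" for i j
    using K that by (metis carrier_matD index_transpose_mat(1))
  have S: "S = (\<Sum>i<n. \<Sum>j<n. complex_of_real (K $$ (i, j)) * cnj (v $ i) * v $ j)"
    unfolding S_def using K v
    by (auto simp: scalar_prod_def lessThan_atLeast0 sum_distrib_left algebra_simps intro!: sum.cong)
  have "cnj S = (\<Sum>i<n. \<Sum>j<n. complex_of_real (K $$ (i, j)) * v $ i * cnj (v $ j))"
    unfolding S by simp
  also have "\<dots> = (\<Sum>j<n. \<Sum>i<n. complex_of_real (K $$ (i, j)) * v $ i * cnj (v $ j))"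
    by (rule sum.swap)
  also have "\<dots> = S"
    unfolding S using symK by (auto simp: algebra_simps intro!: sum.cong)
  finally show ?thesis .
qed

lemma eigenvalue_of_real_symmetric_is_real:
  fixes K :: "real mat"
  assumes K: "K \<in> carrier_mat n n" "K\<^sup>T = K"
    and ev: "eigenvalue (map_mat complex_of_real K) l"
  shows "Im l = 0"
proof -
  obtain v where v: "v \<in> carrier_vec n" "v \<noteq> 0\<^sub>v n"
    and Kv: "map_mat complex_of_real K *\<^sub>v v = l \<cdot>\<^sub>v v"
    using ev K unfolding eigenvalue_def eigenvector_def by auto
  define r where "r = (\<Sum>i<n. (cmod (v $ i))\<^sup>2)"
  have norm_sq: "cnj z * z = complex_of_real ((cmod z)\<^sup>2)" for z
    by (metis complex_norm_square mult.commute of_real_power)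
  have "(\<Sum>i<n. cnj (v $ i) * (map_mat complex_of_real K *\<^sub>v v) $ i) = (\<Sum>i<n. l * (cnj (v $ i) * v $ i))"
    unfolding Kv using v by (intro sum.cong) auto
  also have "\<dots> = l * complex_of_real r"
    unfolding r_def norm_sq of_real_sum sum_distrib_left ..
  finally have "cnj (l * complex_of_real r) = l * complex_of_real r"
    using hermitian_form_of_real_symmetric_is_real[OF K v(1)] by metis
  moreover obtain i where "i < n" "v $ i \<noteq> 0"
    using v by (metis eq_vecI carrier_vecD index_zero_vec)
  then have "0 < r" unfolding r_def by (intro sum_pos2[of _ i]) auto
  ultimately have "cnj l = l" by simp
  then show ?thesis by (metis Reals_cnj_iff complex_is_Real_iff)
qed

lemma real_symmetric_has_eigenvalue:
  fixes K :: "real mat"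
  assumes K: "K \<in> carrier_mat n n" and sym: "K\<^sup>T = K" and n: "0 < n"
  shows "\<exists>e. eigenvalue K e"
proof -
  define Kc where "Kc = map_mat complex_of_real K"
  have Kc: "Kc \<in> carrier_mat n n" using K unfolding Kc_def by auto
  obtain l where l: "eigenvalue Kc l"
    using spectrum_non_empty[OF Kc n] unfolding spectrum_def by auto
  then have "l = complex_of_real (Re l)"
    using eigenvalue_of_real_symmetric_is_real[OF K sym] unfolding Kc_def
    by (simp add: complex_eq_iff)
  moreover have "poly (char_poly Kc) l = 0"
    using l eigenvalue_root_char_poly[OF Kc] by auto
  moreover have "char_poly Kc = map_poly complex_of_real (char_poly K)"
    unfolding Kc_def by (rule of_real_hom.char_poly_hom[OF K])
  ultimately have "poly (char_poly K) (Re l) = 0"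
    by (metis of_real_eq_0_iff of_real_hom.poly_map_poly)
  then show ?thesis using eigenvalue_root_char_poly[OF K] by auto
qed

lemma real_symmetric_unit_eigenvector:
  fixes K :: "real mat"
  assumes K: "K \<in> carrier_mat n n" and sym: "K\<^sup>T = K" and n: "0 < n"
  obtains e v where "v \<in> carrier_vec n" "v \<bullet> v = 1" "K *\<^sub>v v = e \<cdot>\<^sub>v v"
proof -
  obtain e where "eigenvalue K e" using real_symmetric_has_eigenvalue[OF K sym n] by auto
  then obtain v0 where v0: "v0 \<in> carrier_vec n" "v0 \<noteq> 0\<^sub>v n" "K *\<^sub>v v0 = e \<cdot>\<^sub>v v0"
    using find_eigenvector[OF K] K unfolding eigenvector_def by blast
  define v where "v = (1 / sqrt (v0 \<bullet> v0)) \<cdot>\<^sub>v v0"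
  have "0 < v0 \<bullet> v0" using scalar_prod_self_pos[OF v0(1,2)] .
  then have "v \<bullet> v = 1"
    unfolding v_def using v0(1) by (simp add: real_sqrt_mult[symmetric])
  moreover have "K *\<^sub>v v = e \<cdot>\<^sub>v v"
    unfolding v_def using v0 K by (simp add: mult_mat_vec smult_smult_assoc mult.commute)
  moreover have "v \<in> carrier_vec n" unfolding v_def using v0 by auto
  ultimately show ?thesis using that by blast
qed

lemma orthonormal_mat_of_corthogonal:
  fixes ws :: "real vec list"
  assumes ws: "set ws \<subseteq> carrier_vec n" "corthogonal ws" "length ws = n"
  defines "W \<equiv> mat_of_cols n (map (\<lambda>w. (1 / sqrt (w \<bullet> w)) \<cdot>\<^sub>v w) ws)"
  shows "W \<in> carrier_mat n n" and "W\<^sup>T * W = 1\<^sub>m n"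
    and "\<And>i. i < n \<Longrightarrow> col W i = (1 / sqrt (ws ! i \<bullet> ws ! i)) \<cdot>\<^sub>v ws ! i"
proof -
  have wsc: "\<And>i. i < n \<Longrightarrow> ws ! i \<in> carrier_vec n" using ws by auto
  have wsij: "\<And>i j. i < n \<Longrightarrow> j < n \<Longrightarrow> (ws ! i \<bullet> ws ! j = 0) = (i \<noteq> j)"
    using ws(2,3) unfolding corthogonal_def by auto
  have wspos: "\<And>i. i < n \<Longrightarrow> 0 < ws ! i \<bullet> ws ! i"
    using wsij scalar_prod_self_nonneg by (metis less_eq_real_def)
  show colW: "\<And>i. i < n \<Longrightarrow> col W i = (1 / sqrt (ws ! i \<bullet> ws ! i)) \<cdot>\<^sub>v ws ! i"
    unfolding W_def using ws wsc by (subst col_mat_of_cols) auto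
  show "W \<in> carrier_mat n n" unfolding W_def using ws(3) by auto
  moreover have "col W i \<bullet> col W j = (if i = j then 1 else 0)" if "i < n" "j < n" for i j
    using that wsij[OF that] wspos[OF that(1)] wspos[OF that(2)] wsc[OF that(1)] wsc[OF that(2)]
    by (auto simp: colW real_sqrt_mult[symmetric])
  ultimately show "W\<^sup>T * W = 1\<^sub>m n" by (intro eq_matI) auto
qed

lemma orthonormal_completion:
  fixes v :: "real vec"
  assumes v: "v \<in> carrier_vec n" and v1: "v \<bullet> v = 1"
  obtains W where "W \<in> carrier_mat n n" "W\<^sup>T * W = 1\<^sub>m n" "col W 0 = v"
proof -
  interpret cof_vec_space n "TYPE(real)" .
  have v0: "v \<noteq> 0\<^sub>v n" using v1 v by auto
  then have n: "0 < n" using v by (metis carrier_vecD gr0I vec_of_dim_0)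
  define b where "b = basis_completion v"
  define ws where "ws = gram_schmidt n b"
  from basis_completion[OF v v0, folded b_def]
  have b: "distinct b" "\<not> lin_dep (set b)" "set b \<subseteq> carrier_vec n" "hd b = v" "length b = n"
    by auto
  then obtain vs where bv: "b = v # vs" using n by (cases b) auto
  from gram_schmidt_result[OF b(3,1,2) refl, folded ws_def]
  have ws: "set ws \<subseteq> carrier_vec n" "corthogonal ws" "length ws = n" by (auto simp: b(5))
  have "ws ! 0 = v"
    using gram_schmidt_hd[OF v, of vs] ws(3) n unfolding ws_def[symmetric] bv[symmetric]
    by (metis hd_conv_nth list.size(3) not_less_zero)
  with orthonormal_mat_of_corthogonal[OF ws] n v1 show ?thesis by (intro that) auto
qed

lemma orthogonal_deflation:
  fixes K W :: "real mat"
  assumes K: "K \<in> carrier_mat (Suc n) (Suc n)" "K\<^sup>T = K"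
    and W: "W \<in> carrier_mat (Suc n) (Suc n)" "W\<^sup>T * W = 1\<^sub>m (Suc n)"
    and ev: "K *\<^sub>v col W 0 = e \<cdot>\<^sub>v col W 0"
  obtains K' where "K' \<in> carrier_mat n n" "K'\<^sup>T = K'"
    "W\<^sup>T * K * W = four_block_mat (mat 1 1 (\<lambda>_. e)) (0\<^sub>m 1 n) (0\<^sub>m n 1) K'"
proof -
  define A where "A = W\<^sup>T * K * W"
  have A: "A \<in> carrier_mat (Suc n) (Suc n)" unfolding A_def using W K by auto
  have "A\<^sup>T = A" unfolding A_def using W K by (intro transpose_congruence) auto
  then have symA: "\<And>i j. i < Suc n \<Longrightarrow> j < Suc n \<Longrightarrow> A $$ (i, j) = A $$ (j, i)"
    using A by (metis carrier_matD index_transpose_mat(1))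
  have Wt: "W\<^sup>T \<in> carrier_mat (Suc n) (Suc n)" and KW: "K * W \<in> carrier_mat (Suc n) (Suc n)"
    using K W by simp_all
  have "A = W\<^sup>T * (K * W)" unfolding A_def using W K by (simp add: assoc_mult_mat_dims)
  then have "col A 0 = W\<^sup>T *\<^sub>v col (K * W) 0"
    using col_mult2[OF Wt KW zero_less_Suc] by simp
  also have "col (K * W) 0 = K *\<^sub>v col W 0" using col_mult2[OF K(1) W(1) zero_less_Suc] .
  also have "W\<^sup>T *\<^sub>v (K *\<^sub>v col W 0) = e \<cdot>\<^sub>v (W\<^sup>T *\<^sub>v col W 0)"
    unfolding ev using W col_dim[of W 0] by (intro mult_mat_vec[of _ "Suc n" "Suc n"]) auto
  also have "W\<^sup>T *\<^sub>v col W 0 = unit_vec (Suc n) 0"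
    using W col_mult2[of "W\<^sup>T" "Suc n" "Suc n" W "Suc n" 0] by simp
  finally have colA: "col A 0 = e \<cdot>\<^sub>v unit_vec (Suc n) 0" .
  have A0: "A $$ (i, 0) = (if i = 0 then e else 0)" if "i < Suc n" for i
    using that A arg_cong[OF colA, of "\<lambda>v. v $ i"] by auto
  define K' where "K' = mat n n (\<lambda>(i, j). A $$ (Suc i, Suc j))"
  have "K' \<in> carrier_mat n n" "K'\<^sup>T = K'" unfolding K'_def by (auto intro!: eq_matI simp: symA)
  moreover have "A = four_block_mat (mat 1 1 (\<lambda>_. e)) (0\<^sub>m 1 n) (0\<^sub>m n 1) K'"
    using A by (intro eq_matI) (auto simp: K'_def A0 symA[of 0])
  ultimately show ?thesis unfolding A_def by (rule that)
qed

lemma orthogonal_block_extension: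
  fixes U :: "real mat"
  assumes U: "U \<in> carrier_mat n n" "U\<^sup>T * U = 1\<^sub>m n"
  defines "B \<equiv> four_block_mat (1\<^sub>m 1) (0\<^sub>m 1 n) (0\<^sub>m n 1) U"
  shows "B \<in> carrier_mat (Suc n) (Suc n)" and "B\<^sup>T * B = 1\<^sub>m (Suc n)"
    and "B * diag_mat (Suc n) (\<lambda>i. (e # d) ! i) * B\<^sup>T =
      four_block_mat (mat 1 1 (\<lambda>_. e)) (0\<^sub>m 1 n) (0\<^sub>m n 1) (U * diag_mat n (\<lambda>i. d ! i) * U\<^sup>T)"
proof -
  have Bt: "B\<^sup>T = four_block_mat (1\<^sub>m 1) (0\<^sub>m 1 n) (0\<^sub>m n 1) U\<^sup>T"
    unfolding B_def using U by (subst transpose_four_block_mat) auto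
  have D: "diag_mat (Suc n) (\<lambda>i. (e # d) ! i) =
      four_block_mat (mat 1 1 (\<lambda>_. e)) (0\<^sub>m 1 n) (0\<^sub>m n 1) (diag_mat n (\<lambda>i. d ! i))"
    unfolding diag_mat_def by (rule eq_matI) (auto simp: nth_Cons')
  show "B \<in> carrier_mat (Suc n) (Suc n)" unfolding B_def using U by auto
  show "B\<^sup>T * B = 1\<^sub>m (Suc n)"
    unfolding Bt unfolding B_def using U
    by (subst mult_four_block_mat[of _ 1 1 _ n _ n _ _ 1 _ n]) auto
  show "B * diag_mat (Suc n) (\<lambda>i. (e # d) ! i) * B\<^sup>T =
      four_block_mat (mat 1 1 (\<lambda>_. e)) (0\<^sub>m 1 n) (0\<^sub>m n 1) (U * diag_mat n (\<lambda>i. d ! i) * U\<^sup>T)"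
    unfolding D Bt unfolding B_def using U
    by (subst mult_four_block_mat[of _ 1 1 _ n _ n _ _ 1 _ n], auto,
        subst mult_four_block_mat[of _ 1 1 _ n _ n _ _ 1 _ n], auto)
qed

lemma real_symmetric_spectral_decomposition:
  fixes K :: "real mat"
  assumes "K \<in> carrier_mat n n" and "K\<^sup>T = K"
  shows "\<exists>U d. U \<in> carrier_mat n n \<and> U\<^sup>T * U = 1\<^sub>m n \<and> length d = n \<and>
    K = U * diag_mat n (\<lambda>i. d ! i) * U\<^sup>T"
  using assms
proof (induction n arbitrary: K)
  case 0
  then show ?case
    by (intro exI[of _ "1\<^sub>m 0"] exI[of _ "[]"]) (auto intro!: eq_matI simp: diag_mat_def)
next
  case (Suc n)
  then have K: "K \<in> carrier_mat (Suc n) (Suc n)" and sym: "K\<^sup>T = K" by auto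
  obtain e v where v: "v \<in> carrier_vec (Suc n)" "v \<bullet> v = 1" and ev: "K *\<^sub>v v = e \<cdot>\<^sub>v v"
    using real_symmetric_unit_eigenvector[OF K sym zero_less_Suc] by blast
  obtain W where W: "W \<in> carrier_mat (Suc n) (Suc n)" "W\<^sup>T * W = 1\<^sub>m (Suc n)" and "col W 0 = v"
    using orthonormal_completion[OF v] by auto
  with ev obtain K' where K': "K' \<in> carrier_mat n n" "K'\<^sup>T = K'"
    and WKW: "W\<^sup>T * K * W = four_block_mat (mat 1 1 (\<lambda>_. e)) (0\<^sub>m 1 n) (0\<^sub>m n 1) K'"
    using orthogonal_deflation[OF K sym W] by metis
  obtain U' d' where U': "U' \<in> carrier_mat n n" "U'\<^sup>T * U' = 1\<^sub>m n" and d': "length d' = n"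
    and K'_eq: "K' = U' * diag_mat n (\<lambda>i. d' ! i) * U'\<^sup>T"
    using Suc.IH[OF K'] by auto
  define B where "B = four_block_mat (1\<^sub>m 1) (0\<^sub>m 1 n) (0\<^sub>m n 1) U'"
  define D where "D = diag_mat (Suc n) (\<lambda>i. (e # d') ! i)"
  note B = orthogonal_block_extension[OF U', folded B_def]
  have D: "D \<in> carrier_mat (Suc n) (Suc n)" unfolding D_def by simp
  have "K = (W * W\<^sup>T) * K * (W * W\<^sup>T)" using orthogonal_mat_right_inverse[OF W] K by simp
  also have "\<dots> = W * (W\<^sup>T * K * W) * W\<^sup>T" using W K by (simp add: assoc_mult_mat_dims)
  also have "\<dots> = (W * B) * D * (W * B)\<^sup>T"
    unfolding WKW K'_eq B(3)[where e = e and d = d', folded D_def, symmetric] using W B(1) D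
    by (simp add: transpose_mult_dims assoc_mult_mat_dims)
  finally show ?case
    using orthogonal_mat_mult[OF W B(1,2)] W B(1) d' unfolding D_def
    by (intro exI[of _ "W * B"] exI[of _ "e # d'"]) auto
qed

lemma proots_prod_linear_factors: "proots (\<Prod>a\<leftarrow>d. [:- a, 1:]) = mset (d :: real list)"
proof (induction d)
  case (Cons a d)
  have "(\<Prod>a\<leftarrow>d. [:- a, 1:]) \<noteq> (0 :: real poly)" by (auto simp: prod_list_zero_iff)
  then have "proots ([:- a, 1:] * (\<Prod>a\<leftarrow>d. [:- a, 1:])) = add_mset a (proots (\<Prod>a\<leftarrow>d. [:- a, 1:]))"
    by (subst proots_mult) (auto simp: proots_linear_factor)
  then show ?case using Cons.IH by simp
qed simp

lemma eig_sorted_spectral_decomposition: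
  fixes K U :: "real mat"
  assumes U: "U \<in> carrier_mat n n" "U\<^sup>T * U = 1\<^sub>m n" and d: "length d = n"
    and K: "K = U * diag_mat n (\<lambda>i. d ! i) * U\<^sup>T"
  shows "eig_sorted K = sort d"
proof -
  let ?D = "diag_mat n (\<lambda>i. d ! i)"
  have "similar_mat_wit K ?D U U\<^sup>T"
    unfolding similar_mat_wit_def Let_def using U orthogonal_mat_right_inverse[OF U] K by auto
  then have "char_poly K = char_poly ?D"
    by (intro char_poly_similar) (auto simp: similar_mat_def)
  also have "\<dots> = (\<Prod>a\<leftarrow>Matrix.diag_mat ?D. [:- a, 1:])"
    by (rule char_poly_upper_triangular[of _ n]) (auto simp: upper_triangular_def diag_mat_def)
  also have "Matrix.diag_mat ?D = d"
    unfolding Matrix.diag_mat_def using d by (auto simp: diag_mat_def intro!: nth_equalityI)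
  finally have char_poly: "char_poly K = (\<Prod>a\<leftarrow>d. [:- a, 1:])" .
  show ?thesis
    unfolding eig_sorted_def char_poly proots_prod_linear_factors by (simp add: sorted_list_of_multiset_mset)
qed

lemma quadratic_form_spectral_decomposition:
  fixes K U :: "real mat"
  assumes "U \<in> carrier_mat n n" and "K = U * diag_mat n (\<lambda>i. d ! i) * U\<^sup>T"
    and "x \<in> carrier_vec n"
  shows "x \<bullet> (K *\<^sub>v x) = (\<Sum>i<n. d ! i * ((U\<^sup>T *\<^sub>v x) $ i)\<^sup>2)"
  using quadratic_form_congruence_diag_mat[of "U\<^sup>T" n n x "\<lambda>i. d ! i"] assms by simp

lemma spectral_decomposition_psd_nonneg:
  fixes K U :: "real mat"
  assumes U: "U \<in> carrier_mat n n" "U\<^sup>T * U = 1\<^sub>m n"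
    and K: "K = U * diag_mat n (\<lambda>i. d ! i) * U\<^sup>T"
    and psd: "\<And>u. u \<in> carrier_vec n \<Longrightarrow> 0 \<le> u \<bullet> (K *\<^sub>v u)"
    and i: "i < n"
  shows "0 \<le> d ! i"
proof -
  define u where "u = U *\<^sub>v unit_vec n i"
  have u: "u \<in> carrier_vec n" unfolding u_def using U by auto
  have "U\<^sup>T *\<^sub>v u = unit_vec n i"
    unfolding u_def using U by (simp flip: assoc_mult_mat_vec_dims)
  then have "u \<bullet> (K *\<^sub>v u) = (\<Sum>j<n. d ! j * (unit_vec n i $ j)\<^sup>2)"
    using quadratic_form_spectral_decomposition[OF U(1) K u] by simp
  also have "\<dots> = d ! i"
    using i by (simp add: unit_vec_def if_distrib[of "\<lambda>a. _ * a\<^sup>2"] cong: if_cong)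
  finally show ?thesis using psd[OF u] by simp
qed

section \<open>Rayleigh quotient bounds and the Loewner order\<close>

lemma sorted_le_last:
  assumes "sorted s" and "(a :: 'a :: linorder) \<in> set s"
  shows "a \<le> last s"
proof -
  obtain k where k: "k < length s" "s ! k = a" using assms(2) by (auto simp: in_set_conv_nth)
  then have "last s = s ! (length s - 1)" by (intro last_conv_nth) auto
  then show ?thesis using sorted_nth_mono[OF assms(1), of k "length s - 1"] k by auto
qed

lemma sort_nth_one_le:
  fixes d :: "'a :: linorder list"
  assumes "i < length d" "j < length d" "i \<noteq> j"
  shows "sort d ! 1 \<le> d ! i \<or> sort d ! 1 \<le> d ! j"
proof (rule ccontr)
  let ?s = "sort d" and ?P = "\<lambda>a. a < sort d ! 1"
  assume "\<not> ?thesis"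
  then have "{i, j} \<subseteq> {k. k < length d \<and> ?P (d ! k)}" using assms by auto
  then have "2 \<le> length (filter ?P d)"
    using assms(3) card_mono[of "{k. k < length d \<and> ?P (d ! k)}" "{i, j}"]
    by (simp add: length_filter_conv_card)
  moreover have "{k. k < length ?s \<and> ?P (?s ! k)} \<subseteq> {0}"
    using sorted_nth_mono[OF sorted_sort, of 1] by (auto simp: not_less[symmetric])
  then have "length (filter ?P ?s) \<le> 1"
    using card_mono[of "{0}" "{k. k < length ?s \<and> ?P (?s ! k)}"]
    by (simp add: length_filter_conv_card)
  ultimately show False by (simp add: filter_sort)
qed

lemma weighted_sum_squares_le_last_sort:
  fixes d :: "real list" and y :: "nat \<Rightarrow> real"
  assumes "length d = n"
  shows "(\<Sum>i<n. d ! i * (y i)\<^sup>2) \<le> last (sort d) * (\<Sum>i<n. (y i)\<^sup>2)"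
proof -
  have "d ! i \<le> last (sort d)" if "i < n" for i
    using that assms by (intro sorted_le_last) auto
  then show ?thesis
    unfolding sum_distrib_left by (intro sum_mono mult_right_mono) auto
qed

text \<open>A weight below the second smallest one occurs at most once; \<open>z\<close> is concentrated at that
  coordinate, so \<open>y \<bottom> z\<close> makes \<open>y\<close> vanish there.\<close>
lemma second_smallest_le_weighted_sum_squares:
  fixes d :: "real list" and y z :: "nat \<Rightarrow> real"
  assumes d: "length d = n" "\<And>i. i < n \<Longrightarrow> 0 \<le> d ! i"
    and z: "(\<Sum>i<n. d ! i * (z i)\<^sup>2) = 0" "i0 < n" "z i0 \<noteq> 0"
    and yz: "(\<Sum>i<n. y i * z i) = 0"
  shows "sort d ! 1 * (\<Sum>i<n. (y i)\<^sup>2) \<le> (\<Sum>i<n. d ! i * (y i)\<^sup>2)"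
proof -
  let ?l = "sort d ! 1"
  have dz: "d ! i * (z i)\<^sup>2 = 0" if "i < n" for i
    using z(1) d(2) that by (subst (asm) sum_nonneg_eq_0_iff) auto
  have "?l * (y i)\<^sup>2 \<le> d ! i * (y i)\<^sup>2" if i: "i < n" for i
  proof (cases "?l \<le> d ! i")
    case True
    then show ?thesis by (simp add: mult_right_mono)
  next
    case False
    have others: "z j = 0" if "j < n" "j \<noteq> i" for j
    proof -
      have "?l \<le> d ! j" using sort_nth_one_le[of i d j] False that i d(1) by auto
      then have "0 < d ! j" using False d(2)[OF i] by linarith
      then show ?thesis using dz[OF that(1)] by simp
    qed
    then have "z i \<noteq> 0" using z(2,3) by (cases "i0 = i") auto
    moreover have "(\<Sum>j<n. y j * z j) = y i * z i"
      using i others by (subst sum.remove[of _ i]) auto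
    ultimately have "y i = 0" using yz by simp
    then show ?thesis by simp
  qed
  then show ?thesis
    unfolding sum_distrib_left by (intro sum_mono) auto
qed

lemma rayleigh_upper:
  fixes K :: "real mat"
  assumes K: "K \<in> carrier_mat n n" "K\<^sup>T = K" and x: "x \<in> carrier_vec n"
  shows "x \<bullet> (K *\<^sub>v x) \<le> last (eig_sorted K) * (x \<bullet> x)"
proof -
  obtain U d where U: "U \<in> carrier_mat n n" "U\<^sup>T * U = 1\<^sub>m n" and d: "length d = n"
    and K_eq: "K = U * diag_mat n (\<lambda>i. d ! i) * U\<^sup>T"
    using real_symmetric_spectral_decomposition[OF K] by blast
  define y where "y = U\<^sup>T *\<^sub>v x"
  have "x \<bullet> x = (\<Sum>i<n. (y $ i)\<^sup>2)"
    using scalar_prod_orthogonal_mat[OF U x x] U x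
    by (simp add: y_def scalar_prod_self_eq_sum_squares[of _ n])
  then show ?thesis
    using quadratic_form_spectral_decomposition[OF U(1) K_eq x]
      weighted_sum_squares_le_last_sort[OF d, of "\<lambda>i. y $ i"]
    unfolding eig_sorted_spectral_decomposition[OF U d K_eq] y_def by simp
qed

lemma rayleigh_lower_orthogonal_to_kernel:
  fixes K :: "real mat"
  assumes K: "K \<in> carrier_mat n n" "K\<^sup>T = K"
    and psd: "\<And>u. u \<in> carrier_vec n \<Longrightarrow> 0 \<le> u \<bullet> (K *\<^sub>v u)"
    and v0: "v0 \<in> carrier_vec n" "v0 \<noteq> 0\<^sub>v n" "K *\<^sub>v v0 = 0\<^sub>v n"
    and x: "x \<in> carrier_vec n" "x \<bullet> v0 = 0"
  shows "eig_sorted K ! 1 * (x \<bullet> x) \<le> x \<bullet> (K *\<^sub>v x)"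
proof -
  obtain U d where U: "U \<in> carrier_mat n n" "U\<^sup>T * U = 1\<^sub>m n" and d: "length d = n"
    and K_eq: "K = U * diag_mat n (\<lambda>i. d ! i) * U\<^sup>T"
    using real_symmetric_spectral_decomposition[OF K] by blast
  define y where "y = U\<^sup>T *\<^sub>v x"
  define z where "z = U\<^sup>T *\<^sub>v v0"
  have y: "y \<in> carrier_vec n" and z: "z \<in> carrier_vec n"
    unfolding y_def z_def using U x v0 by auto
  have "(\<Sum>i<n. d ! i * (z $ i)\<^sup>2) = v0 \<bullet> (K *\<^sub>v v0)"
    unfolding z_def using quadratic_form_spectral_decomposition[OF U(1) K_eq v0(1)] by simp
  also have "\<dots> = 0" using v0 by simp
  finally have dz: "(\<Sum>i<n. d ! i * (z $ i)\<^sup>2) = 0" .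
  have "z \<bullet> z = v0 \<bullet> v0" using scalar_prod_orthogonal_mat[OF U v0(1) v0(1)] by (simp add: z_def)
  then have "z \<noteq> 0\<^sub>v n" using scalar_prod_self_pos[OF v0(1,2)] by auto
  then obtain i0 where i0: "i0 < n" "z $ i0 \<noteq> 0" using z by (metis eq_vecI carrier_vecD index_zero_vec)
  have "y \<bullet> z = 0"
    using scalar_prod_orthogonal_mat[OF U x(1) v0(1)] x(2) by (simp add: y_def z_def)
  then have "(\<Sum>i<n. y $ i * z $ i) = 0"
    using z by (simp add: scalar_prod_def lessThan_atLeast0)
  then have "sort d ! 1 * (\<Sum>i<n. (y $ i)\<^sup>2) \<le> (\<Sum>i<n. d ! i * (y $ i)\<^sup>2)"
    using second_smallest_le_weighted_sum_squares[OF d _ dz i0]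
      spectral_decomposition_psd_nonneg[OF U K_eq psd] by blast
  moreover have "x \<bullet> x = (\<Sum>i<n. (y $ i)\<^sup>2)"
    using scalar_prod_orthogonal_mat[OF U x(1) x(1)] scalar_prod_self_eq_sum_squares[OF y]
    by (simp add: y_def)
  ultimately show ?thesis
    using quadratic_form_spectral_decomposition[OF U(1) K_eq x(1)]
    unfolding eig_sorted_spectral_decomposition[OF U d K_eq] y_def by simp
qed

lemma rayleigh_bounds_isometry:
  fixes K Y :: "real mat"
  assumes K: "K \<in> carrier_mat n n" "K\<^sup>T = K"
    and psd: "\<And>u. u \<in> carrier_vec n \<Longrightarrow> 0 \<le> u \<bullet> (K *\<^sub>v u)"
    and v0: "v0 \<in> carrier_vec n" "v0 \<noteq> 0\<^sub>v n" "K *\<^sub>v v0 = 0\<^sub>v n"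
    and Y: "Y \<in> carrier_mat n k" "Y\<^sup>T * Y = 1\<^sub>m k" "Y\<^sup>T *\<^sub>v v0 = 0\<^sub>v k"
    and x: "x \<in> carrier_vec k"
  shows "eig_sorted K ! 1 * (x \<bullet> x) \<le> (Y *\<^sub>v x) \<bullet> (K *\<^sub>v (Y *\<^sub>v x))"
    and "(Y *\<^sub>v x) \<bullet> (K *\<^sub>v (Y *\<^sub>v x)) \<le> last (eig_sorted K) * (x \<bullet> x)"
proof -
  have Yx: "Y *\<^sub>v x \<in> carrier_vec n" using Y x by auto
  have "(Y *\<^sub>v x) \<bullet> (Y *\<^sub>v x) = x \<bullet> ((Y\<^sup>T * Y) *\<^sub>v x)"
    using Y(1) x by (simp add: assoc_mult_mat_vec_dims scalar_prod_transpose_mult_vec)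
  also have "\<dots> = x \<bullet> x" unfolding Y(2) using x by simp
  finally have norm: "(Y *\<^sub>v x) \<bullet> (Y *\<^sub>v x) = x \<bullet> x" .
  have "(Y *\<^sub>v x) \<bullet> v0 = x \<bullet> (Y\<^sup>T *\<^sub>v v0)"
    using Y(1) v0(1) x by (simp add: scalar_prod_transpose_mult_vec)
  then have "(Y *\<^sub>v x) \<bullet> v0 = 0" using Y(3) x by simp
  then show "eig_sorted K ! 1 * (x \<bullet> x) \<le> (Y *\<^sub>v x) \<bullet> (K *\<^sub>v (Y *\<^sub>v x))"
    using rayleigh_lower_orthogonal_to_kernel[OF K psd v0 Yx] norm by simp
  show "(Y *\<^sub>v x) \<bullet> (K *\<^sub>v (Y *\<^sub>v x)) \<le> last (eig_sorted K) * (x \<bullet> x)"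
    using rayleigh_upper[OF K Yx] norm by simp
qed

lemma loewner_leI:
  fixes P Q :: "real mat"
  assumes P: "P \<in> carrier_mat n n" "P\<^sup>T = P" and Q: "Q \<in> carrier_mat n n" "Q\<^sup>T = Q"
    and le: "\<And>x. x \<in> carrier_vec n \<Longrightarrow> x \<bullet> (P *\<^sub>v x) \<le> x \<bullet> (Q *\<^sub>v x)"
  shows "loewner_le n P Q"
  unfolding loewner_le_def psd_def
proof (intro conjI ballI)
  show "Q - P \<in> carrier_mat n n" using P Q by auto
  show "(Q - P)\<^sup>T = Q - P" using transpose_minus[OF Q(1) P(1)] P Q by simp
  fix x :: "real vec" assume x: "x \<in> carrier_vec n"
  have "x \<bullet> ((Q - P) *\<^sub>v x) = x \<bullet> (Q *\<^sub>v x) - x \<bullet> (P *\<^sub>v x)"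
    using minus_mult_distrib_mat_vec[OF Q(1) P(1) x] scalar_prod_minus_distrib[of x n] P Q x by auto
  then show "0 \<le> x \<bullet> ((Q - P) *\<^sub>v x)" using le[OF x] by simp
qed

lemma quadratic_form_smult_one_mat:
  "x \<in> carrier_vec n \<Longrightarrow> x \<bullet> ((c \<cdot>\<^sub>m 1\<^sub>m n) *\<^sub>v x) = (c :: real) * (x \<bullet> x)"
  by (simp flip: diag_mat_const add: diag_mat_mult_vec scalar_prod_def sum_distrib_left
      lessThan_atLeast0 algebra_simps)

lemma smult_one_mat_loewner_le:
  fixes H :: "real mat"
  assumes "H \<in> carrier_mat n n" "H\<^sup>T = H" and "\<And>x. x \<in> carrier_vec n \<Longrightarrow> c * (x \<bullet> x) \<le> x \<bullet> (H *\<^sub>v x)"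
  shows "loewner_le n (c \<cdot>\<^sub>m 1\<^sub>m n) H"
  using assms by (intro loewner_leI) (auto intro!: eq_matI simp: quadratic_form_smult_one_mat)

lemma loewner_le_smult_one_mat:
  fixes H :: "real mat"
  assumes "H \<in> carrier_mat n n" "H\<^sup>T = H" and "\<And>x. x \<in> carrier_vec n \<Longrightarrow> x \<bullet> (H *\<^sub>v x) \<le> c * (x \<bullet> x)"
  shows "loewner_le n H (c \<cdot>\<^sub>m 1\<^sub>m n)"
  using assms by (intro loewner_leI) (auto intro!: eq_matI simp: quadratic_form_smult_one_mat)

section \<open>The mass-normalized Laplacian and the Hessian of U\<close>

definition normalized_laplacian :: "nat \<Rightarrow> (nat \<times> nat) list \<Rightarrow> (nat \<Rightarrow> real) \<Rightarrow> (nat \<Rightarrow> real) \<Rightarrow> real mat"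
  where "normalized_laplacian N es w m = Mmhalf N m * laplB N es w * Mmhalf N m"

lemma dim_incidence [simp]:
  "dim_row (incidence N es) = N" "dim_col (incidence N es) = length es"
  unfolding incidence_def by auto

lemma normalized_laplacian_congruence:
  "normalized_laplacian N es w m =
     ((incidence N es)\<^sup>T * Mmhalf N m)\<^sup>T * Gam es w * ((incidence N es)\<^sup>T * Mmhalf N m)"
  unfolding normalized_laplacian_def laplB_def Gam_def Mmhalf_def
  by (simp add: transpose_mult_dims assoc_mult_mat_dims)

lemma normalized_laplacian_carrier: "normalized_laplacian N es w m \<in> carrier_mat N N"
  unfolding normalized_laplacian_def laplB_def Gam_def Mmhalf_def by auto

lemma normalized_laplacian_symmetric:
  "(normalized_laplacian N es w m)\<^sup>T = normalized_laplacian N es w m"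
  unfolding normalized_laplacian_congruence Gam_def Mmhalf_def
  by (rule transpose_congruence) auto

lemma quadratic_form_normalized_laplacian:
  assumes "u \<in> carrier_vec N"
  shows "u \<bullet> (normalized_laplacian N es w m *\<^sub>v u) =
    (\<Sum>l<length es. w l * ((((incidence N es)\<^sup>T * Mmhalf N m) *\<^sub>v u) $ l)\<^sup>2)"
  unfolding normalized_laplacian_congruence Gam_def using assms
  by (intro quadratic_form_congruence_diag_mat) (auto simp: Mmhalf_def)

lemma incidence_transpose_mult_ones:
  assumes "simple_graph N es"
  shows "(incidence N es)\<^sup>T *\<^sub>v vec N (\<lambda>_. 1) = 0\<^sub>v (length es)"
proof (rule eq_vecI)
  fix l assume "l < dim_vec (0\<^sub>v (length es) :: real vec)"
  then have l: "l < length es" by simp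
  define a where "a = fst (es ! l)"
  define b where "b = snd (es ! l)"
  have ab: "a < N" "b < N" "a \<noteq> b"
    using assms l unfolding simple_graph_def a_def b_def by auto
  have "((incidence N es)\<^sup>T *\<^sub>v vec N (\<lambda>_. 1)) $ l =
      (\<Sum>i\<in>{0..<N}. (if i = a then 1 else 0) - (if i = b then 1 else (0 :: real)))"
    using l ab unfolding incidence_def a_def b_def
    by (auto simp: scalar_prod_def row_def intro!: sum.cong)
  also have "\<dots> = 0" using ab by (simp add: sum_subtractf)
  finally show "((incidence N es)\<^sup>T *\<^sub>v vec N (\<lambda>_. 1)) $ l = 0\<^sub>v (length es) $ l"
    using l by simp
qed simp

lemma Mmhalf_mult_Mhalf:
  assumes "\<forall>i<N. 0 < m i"
  shows "Mmhalf N m * Mhalf N m = 1\<^sub>m N" and "Mhalf N m * Mmhalf N m = 1\<^sub>m N"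
  unfolding Mmhalf_def Mhalf_def diag_mat_mult_diag_mat using assms
  by (auto simp flip: diag_mat_one intro!: diag_mat_cong)

lemma normalized_laplacian_kernel:
  assumes "simple_graph N es" and "\<forall>i<N. 0 < m i"
  shows "normalized_laplacian N es w m *\<^sub>v (Mhalf N m *\<^sub>v vec N (\<lambda>_. 1)) = 0\<^sub>v N"
proof -
  have "Mmhalf N m *\<^sub>v (Mhalf N m *\<^sub>v vec N (\<lambda>_. 1)) = vec N (\<lambda>_. 1)"
    using Mmhalf_mult_Mhalf(1)[OF assms(2)]
    by (simp add: Mmhalf_def Mhalf_def flip: assoc_mult_mat_vec_dims)
  then show ?thesis
    unfolding normalized_laplacian_def laplB_def Gam_def
    using incidence_transpose_mult_ones[OF assms(1)] mult_mat_vec_zero[of "diag_mat (length es) w"]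
      mult_mat_vec_zero[of "incidence N es"] mult_mat_vec_zero[of "Mmhalf N m"]
    by (simp add: assoc_mult_mat_vec_dims Mmhalf_def Mhalf_def)
qed

lemma eig_sorted_Minv_laplB:
  assumes "\<forall>i<N. 0 < m i"
  shows "eig_sorted (Minv N m * laplB N es w) = eig_sorted (normalized_laplacian N es w m)"
proof -
  have "Minv N m = Mmhalf N m * Mmhalf N m"
    unfolding Minv_def Mmhalf_def diag_mat_mult_diag_mat using assms
    by (intro diag_mat_cong) (auto simp: real_sqrt_mult[symmetric])
  then have "Minv N m * laplB N es w = Mmhalf N m * normalized_laplacian N es w m * Mhalf N m"
    using Mmhalf_mult_Mhalf[OF assms]
    by (simp add: normalized_laplacian_def laplB_def Gam_def Mmhalf_def Mhalf_def assoc_mult_mat_dims)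
  then have "similar_mat_wit (Minv N m * laplB N es w) (normalized_laplacian N es w m) (Mmhalf N m) (Mhalf N m)"
    unfolding similar_mat_wit_def Let_def using Mmhalf_mult_Mhalf[OF assms] normalized_laplacian_carrier
    by (auto simp: Minv_def Mmhalf_def Mhalf_def laplB_def)
  then show ?thesis
    unfolding eig_sorted_def by (subst char_poly_similar) (auto simp: similar_mat_def)
qed

lemma normalized_laplacian_psd:
  assumes "u \<in> carrier_vec N" and "\<forall>l<length es. 0 \<le> w l"
  shows "0 \<le> u \<bullet> (normalized_laplacian N es w m *\<^sub>v u)"
  unfolding quadratic_form_normalized_laplacian[OF assms(1)] using assms(2)
  by (auto intro!: sum_nonneg)

lemma quadratic_form_normalized_laplacian_mono:
  assumes "u \<in> carrier_vec N" and "\<forall>l<length es. g l \<le> h l"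
  shows "u \<bullet> (normalized_laplacian N es g m *\<^sub>v u) \<le> u \<bullet> (normalized_laplacian N es h m *\<^sub>v u)"
  unfolding quadratic_form_normalized_laplacian[OF assms(1)] using assms(2)
  by (auto intro!: sum_mono mult_right_mono)

lemma quadratic_form_normalized_laplacian_smult:
  assumes "u \<in> carrier_vec N"
  shows "u \<bullet> (normalized_laplacian N es (\<lambda>l. s * w l) m *\<^sub>v u) =
    s * (u \<bullet> (normalized_laplacian N es w m *\<^sub>v u))"
  unfolding quadratic_form_normalized_laplacian[OF assms] by (simp add: sum_distrib_left mult.assoc)

lemma normalized_laplacian_rayleigh_bounds:
  assumes N: "1 \<le> N" and sg: "simple_graph N es"
    and w: "\<forall>l<length es. 0 \<le> w l" and m: "\<forall>i<N. 0 < m i"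
    and Y: "Y \<in> carrier_mat N k" "Y\<^sup>T * Y = 1\<^sub>m k" "Y\<^sup>T * Mhalf N m *\<^sub>v vec N (\<lambda>_. 1) = 0\<^sub>v k"
    and x: "x \<in> carrier_vec k"
  shows "eig_sorted (normalized_laplacian N es w m) ! 1 * (x \<bullet> x)
      \<le> (Y *\<^sub>v x) \<bullet> (normalized_laplacian N es w m *\<^sub>v (Y *\<^sub>v x))"
    and "(Y *\<^sub>v x) \<bullet> (normalized_laplacian N es w m *\<^sub>v (Y *\<^sub>v x))
      \<le> last (eig_sorted (normalized_laplacian N es w m)) * (x \<bullet> x)"
proof -
  define v0 where "v0 = Mhalf N m *\<^sub>v vec N (\<lambda>_. 1)"
  have v0: "v0 \<in> carrier_vec N" and "v0 $ 0 = sqrt (m 0)"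
    unfolding v0_def Mhalf_def using N by (auto simp: diag_mat_mult_vec)
  then have v0_nz: "v0 \<noteq> 0\<^sub>v N" using N m by auto
  have Yv0: "Y\<^sup>T *\<^sub>v v0 = 0\<^sub>v k"
    using Y unfolding v0_def Mhalf_def by (simp flip: assoc_mult_mat_vec_dims)
  note rayleigh = rayleigh_bounds_isometry[OF normalized_laplacian_carrier normalized_laplacian_symmetric
      normalized_laplacian_psd[OF _ w] v0 v0_nz normalized_laplacian_kernel[OF sg m, folded v0_def]
      Y(1,2) Yv0 x]
  show "eig_sorted (normalized_laplacian N es w m) ! 1 * (x \<bullet> x)
      \<le> (Y *\<^sub>v x) \<bullet> (normalized_laplacian N es w m *\<^sub>v (Y *\<^sub>v x))"
    using rayleigh(1) by simp
  show "(Y *\<^sub>v x) \<bullet> (normalized_laplacian N es w m *\<^sub>v (Y *\<^sub>v x))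
      \<le> last (eig_sorted (normalized_laplacian N es w m)) * (x \<bullet> x)"
    using rayleigh(2) by simp
qed

lemma hessU_eq_normalized_laplacian:
  assumes "Y \<in> carrier_mat N k"
  shows "hessU N es w m Y th = Y\<^sup>T *
    normalized_laplacian N es (\<lambda>l. w l * cos ((((incidence N es)\<^sup>T * Mmhalf N m * Y) *\<^sub>v th) $ l)) m * Y"
  using assms unfolding hessU_def normalized_laplacian_def laplB_def Gam_def Let_def Mmhalf_def
  by (simp add: assoc_mult_mat_dims)

lemma hessU_carrier_symmetric:
  assumes "Y \<in> carrier_mat N k"
  shows "hessU N es w m Y th \<in> carrier_mat k k" and "(hessU N es w m Y th)\<^sup>T = hessU N es w m Y th"
  unfolding hessU_eq_normalized_laplacian[OF assms] using assms
  by (auto intro!: transpose_congruence normalized_laplacian_carrier normalized_laplacian_symmetric)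

lemma hessU_quadratic_form_bounds:
  assumes N: "1 \<le> N" and sg: "simple_graph N es"
    and w: "\<forall>l<length es. 0 \<le> w l" and m: "\<forall>i<N. 0 < m i"
    and Y: "Y \<in> carrier_mat N k" "Y\<^sup>T * Y = 1\<^sub>m k" "Y\<^sup>T * Mhalf N m *\<^sub>v vec N (\<lambda>_. 1) = 0\<^sub>v k"
    and s: "0 \<le> s" "\<forall>l<length es. s \<le> cos ((((incidence N es)\<^sup>T * Mmhalf N m * Y) *\<^sub>v th) $ l)"
    and x: "x \<in> carrier_vec k"
  shows "s * (eig_sorted (normalized_laplacian N es w m) ! 1 * (x \<bullet> x)) \<le> x \<bullet> (hessU N es w m Y th *\<^sub>v x)"
    and "x \<bullet> (hessU N es w m Y th *\<^sub>v x) \<le> last (eig_sorted (normalized_laplacian N es w m)) * (x \<bullet> x)"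
proof -
  define c where "c l = cos ((((incidence N es)\<^sup>T * Mmhalf N m * Y) *\<^sub>v th) $ l)" for l
  define q where "q g = (Y *\<^sub>v x) \<bullet> (normalized_laplacian N es g m *\<^sub>v (Y *\<^sub>v x))" for g
  have Yx: "Y *\<^sub>v x \<in> carrier_vec N" using Y x by auto
  have H: "x \<bullet> (hessU N es w m Y th *\<^sub>v x) = q (\<lambda>l. w l * c l)"
    unfolding hessU_eq_normalized_laplacian[OF Y(1)] q_def c_def
    using Y(1) x normalized_laplacian_carrier by (simp add: quadratic_form_congruence)
  have weights: "s * w l \<le> w l * c l" "w l * c l \<le> w l" if "l < length es" for l
  proof -
    have "s \<le> c l" "c l \<le> 1" using s(2) that unfolding c_def by auto
    then show "s * w l \<le> w l * c l" "w l * c l \<le> w l"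
      using w that by (auto simp: mult.commute[of s] intro: mult_left_mono mult_left_le)
  qed
  have "s * q w = q (\<lambda>l. s * w l)"
    unfolding q_def by (rule quadratic_form_normalized_laplacian_smult[OF Yx, symmetric])
  also have "\<dots> \<le> q (\<lambda>l. w l * c l)"
    unfolding q_def using weights(1) by (intro quadratic_form_normalized_laplacian_mono[OF Yx]) auto
  finally have lower: "s * q w \<le> q (\<lambda>l. w l * c l)" .
  have upper: "q (\<lambda>l. w l * c l) \<le> q w"
    unfolding q_def using weights(2) by (intro quadratic_form_normalized_laplacian_mono[OF Yx]) auto
  note rayleigh = normalized_laplacian_rayleigh_bounds[OF N sg w m Y x, folded q_def]
  show "s * (eig_sorted (normalized_laplacian N es w m) ! 1 * (x \<bullet> x)) \<le> x \<bullet> (hessU N es w m Y th *\<^sub>v x)"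
    unfolding H using mult_left_mono[OF rayleigh(1) s(1)] lower by linarith
  show "x \<bullet> (hessU N es w m Y th *\<^sub>v x) \<le> last (eig_sorted (normalized_laplacian N es w m)) * (x \<bullet> x)"
    unfolding H using rayleigh(2) upper by linarith
qed

lemma sin_le_cos_of_abs_le:
  fixes x \<rho> :: real
  assumes "\<bar>x\<bar> \<le> pi / 2 - \<rho>" and "- (pi / 2) \<le> \<rho>"
  shows "sin \<rho> \<le> cos x"
proof -
  have "cos (pi / 2 - \<rho>) \<le> cos \<bar>x\<bar>" using assms by (intro cos_monotone_0_pi_le) auto
  then show ?thesis by (simp add: cos_diff)
qed

theorem lemmaD2:
  fixes N :: nat and es :: "(nat \<times> nat) list" and w m :: "nat \<Rightarrow> real"
    and Y :: "real mat" and \<rho> :: real and th :: "real vec"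
  assumes "N \<ge> 1"
    and "simple_graph N es" and "graph_connected N es"
    and "\<forall>l < length es. w l > 0"
    and "\<forall>i < N. m i > 0"
    and "Y \<in> carrier_mat N (N - 1)"
    and "Y\<^sup>T * Y = 1\<^sub>m (N - 1)"
    and "Y\<^sup>T * Mhalf N m *\<^sub>v (vec N (\<lambda>_. 1)) = 0\<^sub>v (N - 1)"
    and "0 < \<rho>" and "\<rho> < pi / 2"
    and "th \<in> S_rho N es m Y \<rho>"
  shows "loewner_le (N - 1)
           ((sin \<rho> * eig_sorted (Minv N m * laplB N es w) ! 1) \<cdot>\<^sub>m 1\<^sub>m (N - 1))
           (hessU N es w m Y th)
       \<and> loewner_le (N - 1) (hessU N es w m Y th)
           (last (eig_sorted (Minv N m * laplB N es w)) \<cdot>\<^sub>m 1\<^sub>m (N - 1))"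
proof -
  have w: "\<forall>l<length es. 0 \<le> w l" using assms(4) by auto
  have sin: "0 \<le> sin \<rho>" using assms(9,10) by (intro sin_ge_zero) auto
  have "\<forall>l<length es. sin \<rho> \<le> cos ((((incidence N es)\<^sup>T * Mmhalf N m * Y) *\<^sub>v th) $ l)"
    using assms(9,10,11) unfolding S_rho_def by (auto intro!: sin_le_cos_of_abs_le)
  note bounds = hessU_quadratic_form_bounds[OF assms(1,2) w assms(5-8) sin this]
  show ?thesis
    unfolding eig_sorted_Minv_laplB[OF assms(5)]
    using bounds hessU_carrier_symmetric[OF assms(6)]
    by (auto intro!: smult_one_mat_loewner_le loewner_le_smult_one_mat simp: mult.assoc)
qed

end
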